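(* Let $R$ be a schematic semi-graded ring and $J$ a compatible semi-graded ideal of $R$. Then $R/J$ is a schematic semi-graded ring.
   Context: Rings are associative with $1$; modules are left modules. A ring $R$ is semi-graded (SG) if there are additive subgroups $R_n$ ($n\in\mathbb{Z}$) with $R=\bigoplus_n R_n$, $R_mR_n\subseteq\bigoplus_{k\le m+n}R_k$, and $1\in R_0$; positively SG if $R_n=0$ for $n<0$. A submodule $N$ of an SG module $M=\bigoplus M_n$ is an SG submodule if $N=\bigoplus_n(N\cap M_n)$. An SG ideal is a two-sided ideal $J$ that is an SG submodule of $R$; then $R/J$ is SG with $(R/J)_n=(R_n+J)/J$. Let $R'_n=\{r\in R_n: rh\in R_{n+m}\ \forall m,\forall h\in R_m\}$, $R''_n=\{r\in R'_n: hr\in R_{n+m}\ \forall m,\forall h\in R_m\}$, $R'=\bigcup R'_n$, $R''=\bigcup R''_n$ (and similarly $(R/J)'$ for $R/J$). $J$ is compatible if the image of $R'$ in $R/J$ equals $(R/J)'$. A left Ore set $S$ is good if $S\subseteq R''$ and for $s\in S$, $r\in R'$ there are $u\in R'$, $v\in S$ with $us=vr$. For positively SG $R$, $R_{\ge t}$ is the intersection of all SG ideals containing $\bigoplus_{k\ge t}R_k$. $R$ is schematic if it is positively SG, left Noetherian, and there is a finite set $I$ of good left Ore sets $S$ with $S\cap\bigoplus_{k\ge1}R_k\neq\emptyset$ such that for each $(x_S)_{S\in I}\in\prod_{S\in I}S$ there exist $t,m\in\mathbb{N}$ with $(R_{\ge t})^m\subseteq\sum_{S\in I}Rx_S$. 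*)

theory Defs
  imports "HOL-Algebra.Algebra"
begin

definition in_sum :: "('a, 'b) ring_scheme \<Rightarrow> (int \<Rightarrow> 'a set) \<Rightarrow> int set \<Rightarrow> 'a \<Rightarrow> bool" where
  "in_sum R G S x \<longleftrightarrow> (\<exists>f. (\<forall>n. f n \<in> G n) \<and> finite {n. f n \<noteq> \<zero>\<^bsub>R\<^esub>}
      \<and> {n. f n \<noteq> \<zero>\<^bsub>R\<^esub>} \<subseteq> S \<and> x = (\<Oplus>\<^bsub>R\<^esub>n\<in>{n. f n \<noteq> \<zero>\<^bsub>R\<^esub>}. f n))"

definition direct_sum_decomp :: "('a, 'b) ring_scheme \<Rightarrow> (int \<Rightarrow> 'a set) \<Rightarrow> bool" where
  "direct_sum_decomp R G \<longleftrightarrow> (\<forall>n. additive_subgroup (G n) R) \<and>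
     (\<forall>x\<in>carrier R. \<exists>!f. (\<forall>n. f n \<in> G n) \<and> finite {n. f n \<noteq> \<zero>\<^bsub>R\<^esub>}
        \<and> x = (\<Oplus>\<^bsub>R\<^esub>n\<in>{n. f n \<noteq> \<zero>\<^bsub>R\<^esub>}. f n))"

definition semi_graded :: "('a, 'b) ring_scheme \<Rightarrow> (int \<Rightarrow> 'a set) \<Rightarrow> bool" where
  "semi_graded R G \<longleftrightarrow> ring R \<and> direct_sum_decomp R G \<and>
     (\<forall>m n. \<forall>a\<in>G m. \<forall>b\<in>G n. in_sum R G {..m+n} (a \<otimes>\<^bsub>R\<^esub> b)) \<and>
     \<one>\<^bsub>R\<^esub> \<in> G 0"

definition pos_semi_graded :: "('a, 'b) ring_scheme \<Rightarrow> (int \<Rightarrow> 'a set) \<Rightarrow> bool" where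
  "pos_semi_graded R G \<longleftrightarrow> semi_graded R G \<and> (\<forall>n<0. G n = {\<zero>\<^bsub>R\<^esub>})"

definition sg_ideal :: "('a, 'b) ring_scheme \<Rightarrow> (int \<Rightarrow> 'a set) \<Rightarrow> 'a set \<Rightarrow> bool" where
  "sg_ideal R G J \<longleftrightarrow> ideal J R \<and> (\<forall>x\<in>J. in_sum R (\<lambda>n. J \<inter> G n) UNIV x)"

definition quot_grading :: "('a, 'b) ring_scheme \<Rightarrow> 'a set \<Rightarrow> (int \<Rightarrow> 'a set) \<Rightarrow> int \<Rightarrow> 'a set set" where
  "quot_grading R J G n = (\<lambda>r. J +>\<^bsub>R\<^esub> r) ` G n"

definition R'_comp :: "('a, 'b) ring_scheme \<Rightarrow> (int \<Rightarrow> 'a set) \<Rightarrow> int \<Rightarrow> 'a set" where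
  "R'_comp R G n = {r \<in> G n. \<forall>m. \<forall>h\<in>G m. r \<otimes>\<^bsub>R\<^esub> h \<in> G (n + m)}"

definition R''_comp :: "('a, 'b) ring_scheme \<Rightarrow> (int \<Rightarrow> 'a set) \<Rightarrow> int \<Rightarrow> 'a set" where
  "R''_comp R G n = {r \<in> R'_comp R G n. \<forall>m. \<forall>h\<in>G m. h \<otimes>\<^bsub>R\<^esub> r \<in> G (n + m)}"

definition R' :: "('a, 'b) ring_scheme \<Rightarrow> (int \<Rightarrow> 'a set) \<Rightarrow> 'a set" where
  "R' R G = (\<Union>n. R'_comp R G n)"

definition R'' :: "('a, 'b) ring_scheme \<Rightarrow> (int \<Rightarrow> 'a set) \<Rightarrow> 'a set" where
  "R'' R G = (\<Union>n. R''_comp R G n)"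

definition compatible :: "('a, 'b) ring_scheme \<Rightarrow> (int \<Rightarrow> 'a set) \<Rightarrow> 'a set \<Rightarrow> bool" where
  "compatible R G J \<longleftrightarrow>
     (\<lambda>r. J +>\<^bsub>R\<^esub> r) ` R' R G = R' (R Quot J) (quot_grading R J G)"

definition left_ore_set :: "('a, 'b) ring_scheme \<Rightarrow> 'a set \<Rightarrow> bool" where
  "left_ore_set R S \<longleftrightarrow> S \<subseteq> carrier R \<and> \<one>\<^bsub>R\<^esub> \<in> S \<and> \<zero>\<^bsub>R\<^esub> \<notin> S \<and>
     (\<forall>s\<in>S. \<forall>t\<in>S. s \<otimes>\<^bsub>R\<^esub> t \<in> S) \<and>
     (\<forall>s\<in>S. \<forall>r\<in>carrier R. \<exists>s'\<in>S. \<exists>r'\<in>carrier R. s' \<otimes>\<^bsub>R\<^esub> r = r' \<otimes>\<^bsub>R\<^esub> s)"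

definition good_ore_set :: "('a, 'b) ring_scheme \<Rightarrow> (int \<Rightarrow> 'a set) \<Rightarrow> 'a set \<Rightarrow> bool" where
  "good_ore_set R G S \<longleftrightarrow> left_ore_set R S \<and> S \<subseteq> R'' R G \<and>
     (\<forall>s\<in>S. \<forall>r\<in>R' R G. \<exists>u\<in>R' R G. \<exists>v\<in>S. u \<otimes>\<^bsub>R\<^esub> s = v \<otimes>\<^bsub>R\<^esub> r)"

definition R_ge :: "('a, 'b) ring_scheme \<Rightarrow> (int \<Rightarrow> 'a set) \<Rightarrow> nat \<Rightarrow> 'a set" where
  "R_ge R G t = \<Inter>{I. sg_ideal R G I \<and> {x. in_sum R G {int t..} x} \<subseteq> I}"

primrec ideal_pow :: "('a, 'b) ring_scheme \<Rightarrow> 'a set \<Rightarrow> nat \<Rightarrow> 'a set" where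
  "ideal_pow R I 0 = carrier R"
| "ideal_pow R I (Suc m) = ideal_prod R (ideal_pow R I m) I"

definition left_ideal :: "'a set \<Rightarrow> ('a, 'b) ring_scheme \<Rightarrow> bool" where
  "left_ideal I R \<longleftrightarrow> additive_subgroup I R \<and> (\<forall>a\<in>carrier R. \<forall>x\<in>I. a \<otimes>\<^bsub>R\<^esub> x \<in> I)"

definition left_noetherian :: "('a, 'b) ring_scheme \<Rightarrow> bool" where
  "left_noetherian R \<longleftrightarrow> ring R \<and>
     (\<forall>f :: nat \<Rightarrow> 'a set. (\<forall>n. left_ideal (f n) R) \<and> (\<forall>n. f n \<subseteq> f (Suc n))
        \<longrightarrow> (\<exists>N. \<forall>n\<ge>N. f n = f N))"

definition left_ideal_sum :: "('a, 'b) ring_scheme \<Rightarrow> 'c set \<Rightarrow> ('c \<Rightarrow> 'a) \<Rightarrow> 'a set" where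
  "left_ideal_sum R I x = {(\<Oplus>\<^bsub>R\<^esub>i\<in>I. r i \<otimes>\<^bsub>R\<^esub> x i) | r. r \<in> I \<rightarrow> carrier R}"

definition schematic :: "('a, 'b) ring_scheme \<Rightarrow> (int \<Rightarrow> 'a set) \<Rightarrow> bool" where
  "schematic R G \<longleftrightarrow> pos_semi_graded R G \<and> left_noetherian R \<and>
     (\<exists>I :: 'a set set. finite I \<and>
        (\<forall>S\<in>I. good_ore_set R G S \<and> S \<inter> {x. in_sum R G {1..} x} \<noteq> {}) \<and>
        (\<forall>x \<in> Pi I (\<lambda>S. S). \<exists>t m. ideal_pow R (R_ge R G t) m \<subseteq> left_ideal_sum R I x))"

end

theory Submission
  imports Defs
begin

(* The projection pi : R -> R/J maps each R_n onto (R/J)_n, and every ingredient of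
   "schematic" is pushed forward along it. The components (R/J)_n still form a direct sum
   because J is semi-graded: if lifts of two decompositions have sums congruent modulo J,
   every homogeneous component of their difference lies in J. Ore sets of R meeting J are
   discarded; the others map to good Ore sets, compatibility being needed to lift elements
   of (R/J)' to R'. For the covering condition, lift the chosen x'_S' to x_S in S, taking
   x_S in S \<inter> J when S meets J. As pi(R_ge t) is an SG ideal containing the elements of
   degree >= t, (R/J)_ge t ^ m lies in pi((R_ge t)^m) \<subseteq> pi(\<Sum> R x_S), which lies in
   \<Sum> (R/J) x'_S' because the pi(x_S) with S meeting J vanish. *)

section \<open>Images under ring homomorphisms\<close>

lemma ideal_prod_mono:
  assumes "A \<subseteq> A'" "B \<subseteq> B'"
  shows "ideal_prod R A B \<subseteq> ideal_prod R A' B'"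
proof
  fix x assume "x \<in> ideal_prod R A B"
  then show "x \<in> ideal_prod R A' B'"
    by (induct x rule: ideal_prod.induct) (use assms in \<open>auto intro: ideal_prod.intros\<close>)
qed

lemma (in ring) ideal_prod_subset_carrier:
  assumes "A \<subseteq> carrier R" "B \<subseteq> carrier R"
  shows "ideal_prod R A B \<subseteq> carrier R"
proof
  fix x assume "x \<in> ideal_prod R A B"
  then show "x \<in> carrier R"
    by (induct x rule: ideal_prod.induct) (use assms in auto)
qed

lemma (in ring) ideal_pow_subset_carrier:
  "A \<subseteq> carrier R \<Longrightarrow> ideal_pow R A m \<subseteq> carrier R"
  by (induct m) (simp_all add: ideal_prod_subset_carrier)

lemma (in ring_hom_ring) ideal_prod_image_subset:
  assumes "A \<subseteq> carrier R" "B \<subseteq> carrier R"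
  shows "ideal_prod S (h ` A) (h ` B) \<subseteq> h ` ideal_prod R A B"
proof
  fix z assume "z \<in> ideal_prod S (h ` A) (h ` B)"
  then show "z \<in> h ` ideal_prod R A B"
  proof (induct z rule: ideal_prod.induct)
    case (prod i j)
    then obtain a b where "a \<in> A" "b \<in> B" "i = h a" "j = h b" by blast
    moreover have "a \<in> carrier R" "b \<in> carrier R" using calculation assms by blast+
    ultimately have "i \<otimes>\<^bsub>S\<^esub> j = h (a \<otimes> b)" "a \<otimes> b \<in> ideal_prod R A B"
      by (auto intro: ideal_prod.prod)
    then show ?case by blast
  next
    case (sum s1 s2)
    then obtain x1 x2 where "x1 \<in> ideal_prod R A B" "x2 \<in> ideal_prod R A B" "s1 = h x1" "s2 = h x2"
      by blast
    moreover have "x1 \<in> carrier R" "x2 \<in> carrier R"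
      using calculation R.ideal_prod_subset_carrier[OF assms] by blast+
    ultimately have "s1 \<oplus>\<^bsub>S\<^esub> s2 = h (x1 \<oplus> x2)" "x1 \<oplus> x2 \<in> ideal_prod R A B"
      by (auto intro: ideal_prod.sum)
    then show ?case by blast
  qed
qed

lemma (in ring_hom_ring) ideal_pow_image_subset:
  assumes "h ` carrier R = carrier S" "A \<subseteq> carrier R" "B \<subseteq> h ` A"
  shows "ideal_pow S B m \<subseteq> h ` ideal_pow R A m"
proof (induct m)
  case 0
  show ?case using assms(1) by simp
next
  case (Suc m)
  have "ideal_pow S B (Suc m) \<subseteq> ideal_prod S (h ` ideal_pow R A m) (h ` A)"
    using Suc assms(3) by (simp add: ideal_prod_mono)
  also have "\<dots> \<subseteq> h ` ideal_pow R A (Suc m)"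
    using ideal_prod_image_subset[OF R.ideal_pow_subset_carrier[OF assms(2)] assms(2)] by simp
  finally show ?case .
qed

lemma (in abelian_monoid) finsum_closed_in_submonoid:
  assumes "finite A" "f \<in> A \<rightarrow> M" "M \<subseteq> carrier G" "\<zero> \<in> M"
    and "\<And>x y. x \<in> M \<Longrightarrow> y \<in> M \<Longrightarrow> x \<oplus> y \<in> M"
  shows "finsum G f A \<in> M"
  using assms(1,2)
proof (induct A rule: finite_induct)
  case (insert a A)
  then have "f \<in> A \<rightarrow> carrier G" "f a \<in> carrier G" using assms(3) by auto
  with insert assms(5) show ?case by simp
qed (use assms(4) in simp)

lemma (in abelian_monoid) finsum_over_support:
  assumes "finite A" "{n. f n \<noteq> \<zero>} \<subseteq> A" "f \<in> A \<rightarrow> carrier G"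
  shows "(\<Oplus>n\<in>{n. f n \<noteq> \<zero>}. f n) = (\<Oplus>n\<in>A. f n)"
  using assms by (intro add.finprod_mono_neutral_cong_right[symmetric]) auto

lemma (in ring) left_ideal_sum_subset_carrier:
  assumes "x \<in> I \<rightarrow> carrier R"
  shows "left_ideal_sum R I x \<subseteq> carrier R"
  using assms unfolding left_ideal_sum_def by (auto intro!: finsum_closed)

lemma (in ring) left_ideal_sum_zero_closed:
  assumes "x \<in> I \<rightarrow> carrier R"
  shows "\<zero> \<in> left_ideal_sum R I x"
proof -
  have "\<zero> = (\<Oplus>i\<in>I. \<zero> \<otimes> x i)"
    using assms by (simp add: Pi_iff add.finprod_one_eqI)
  then show ?thesis unfolding left_ideal_sum_def by force
qed

lemma (in ring) left_ideal_sum_add_closed: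
  assumes "x \<in> I \<rightarrow> carrier R" "a \<in> left_ideal_sum R I x" "b \<in> left_ideal_sum R I x"
  shows "a \<oplus> b \<in> left_ideal_sum R I x"
proof -
  obtain r s where rs: "r \<in> I \<rightarrow> carrier R" "s \<in> I \<rightarrow> carrier R"
    "a = (\<Oplus>i\<in>I. r i \<otimes> x i)" "b = (\<Oplus>i\<in>I. s i \<otimes> x i)"
    using assms(2,3) unfolding left_ideal_sum_def by blast
  have "a \<oplus> b = (\<Oplus>i\<in>I. r i \<otimes> x i \<oplus> s i \<otimes> x i)"
    using rs assms(1) by (simp add: Pi_iff finsum_addf)
  also have "\<dots> = (\<Oplus>i\<in>I. (r i \<oplus> s i) \<otimes> x i)"
    using rs assms(1) by (intro add.finprod_cong') (auto simp: Pi_iff l_distr)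
  finally show ?thesis unfolding left_ideal_sum_def using rs by force
qed

lemma (in ring) left_ideal_sum_mult_generator:
  assumes "finite I" "x \<in> I \<rightarrow> carrier R" "j \<in> I" "a \<in> carrier R"
  shows "a \<otimes> x j \<in> left_ideal_sum R I x"
proof -
  have "(\<Oplus>i\<in>I. (if i = j then a else \<zero>) \<otimes> x i) = (\<Oplus>i\<in>I. if i = j then a \<otimes> x i else \<zero>)"
    using assms by (intro add.finprod_cong') (auto simp: Pi_iff)
  also have "\<dots> = a \<otimes> x j"
    using assms by (intro add.finprod_singleton_swap) (auto simp: Pi_iff)
  finally have "a \<otimes> x j = (\<Oplus>i\<in>I. (if i = j then a else \<zero>) \<otimes> x i)" ..
  then show ?thesis unfolding left_ideal_sum_def using assms(4) by force
qed

lemma (in ring_hom_ring) left_ideal_sum_image_subset: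
  assumes "finite I" "finite I'" "x \<in> I \<rightarrow> carrier R" "y \<in> I' \<rightarrow> carrier S"
    and "\<And>i. i \<in> I \<Longrightarrow> h (x i) = \<zero>\<^bsub>S\<^esub> \<or> h (x i) \<in> y ` I'"
  shows "h ` left_ideal_sum R I x \<subseteq> left_ideal_sum S I' y"
proof
  fix z assume "z \<in> h ` left_ideal_sum R I x"
  then obtain r where r: "r \<in> I \<rightarrow> carrier R" "z = h (\<Oplus>i\<in>I. r i \<otimes> x i)"
    unfolding left_ideal_sum_def by blast
  have "h (r i \<otimes> x i) \<in> left_ideal_sum S I' y" if "i \<in> I" for i
  proof -
    have "r i \<in> carrier R" "x i \<in> carrier R" using that r(1) assms(3) by auto
    then have hom: "h (r i \<otimes> x i) = h (r i) \<otimes>\<^bsub>S\<^esub> h (x i)" "h (r i) \<in> carrier S"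
      by simp_all
    from assms(5)[OF that] show ?thesis
    proof
      assume "h (x i) = \<zero>\<^bsub>S\<^esub>"
      then show ?thesis using hom assms(4) by (simp add: S.left_ideal_sum_zero_closed)
    next
      assume "h (x i) \<in> y ` I'"
      then show ?thesis using hom assms(2,4) by (auto intro: S.left_ideal_sum_mult_generator)
    qed
  qed
  moreover have "z = (\<Oplus>\<^bsub>S\<^esub>i\<in>I. h (r i \<otimes> x i))"
    using r assms(3) by (simp add: Pi_iff o_def)
  ultimately show "z \<in> left_ideal_sum S I' y"
    using assms(1,4) by (auto intro!: S.finsum_closed_in_submonoid
        S.left_ideal_sum_subset_carrier S.left_ideal_sum_zero_closed S.left_ideal_sum_add_closed)
qed

lemma (in ring_hom_ring) left_ideal_vimage:
  assumes "left_ideal L S"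
  shows "left_ideal {r \<in> carrier R. h r \<in> L} R"
proof -
  have L: "additive_subgroup L S" "\<And>a x. a \<in> carrier S \<Longrightarrow> x \<in> L \<Longrightarrow> a \<otimes>\<^bsub>S\<^esub> x \<in> L"
    using assms unfolding left_ideal_def by auto
  have "subgroup {r \<in> carrier R. h r \<in> L} (add_monoid R)"
  proof
    fix a b assume "a \<in> {r \<in> carrier R. h r \<in> L}" "b \<in> {r \<in> carrier R. h r \<in> L}"
    then show "a \<otimes>\<^bsub>add_monoid R\<^esub> b \<in> {r \<in> carrier R. h r \<in> L}"
      using additive_subgroup.a_closed[OF L(1)] by simp
  next
    fix a assume "a \<in> {r \<in> carrier R. h r \<in> L}"
    then show "inv\<^bsub>add_monoid R\<^esub> a \<in> {r \<in> carrier R. h r \<in> L}"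
      using additive_subgroup.a_inv_closed[OF L(1)] by (simp flip: a_inv_def)
  qed (use additive_subgroup.zero_closed[OF L(1)] in auto)
  moreover have "a \<otimes> x \<in> {r \<in> carrier R. h r \<in> L}"
    if "a \<in> carrier R" "x \<in> {r \<in> carrier R. h r \<in> L}" for a x
    using that L(2) by simp
  ultimately show ?thesis unfolding left_ideal_def additive_subgroup_def by blast
qed

lemma (in ring_hom_ring) left_noetherian_surjective_image:
  assumes noeth: "left_noetherian R" and surj: "h ` carrier R = carrier S"
  shows "left_noetherian S"
  unfolding left_noetherian_def
proof (intro conjI allI impI)
  show "ring S" by (rule S.ring_axioms)
  fix L :: "nat \<Rightarrow> 'c set"
  assume L: "(\<forall>n. left_ideal (L n) S) \<and> (\<forall>n. L n \<subseteq> L (Suc n))"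
  define P where "P n = {r \<in> carrier R. h r \<in> L n}" for n
  have "left_ideal (P n) R" for n
    unfolding P_def using L by (simp add: left_ideal_vimage)
  moreover have "P n \<subseteq> P (Suc n)" for n
    unfolding P_def using L by blast
  ultimately obtain N where N: "\<forall>n\<ge>N. P n = P N"
    using noeth unfolding left_noetherian_def by (meson allI)
  have "L n \<subseteq> carrier S" for n
    using L additive_subgroup.a_subset unfolding left_ideal_def by blast
  then have LP: "L n = h ` P n" for n
  proof (intro equalityI subsetI)
    fix y assume y: "y \<in> L n"
    then have "y \<in> carrier S" using \<open>L n \<subseteq> carrier S\<close> by blast
    then have "y \<in> h ` carrier R" using surj by simp
    then obtain r where "r \<in> carrier R" "y = h r" by blast
    with y show "y \<in> h ` P n" unfolding P_def by blast
  qed (auto simp: P_def)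
  show "\<exists>N. \<forall>n\<ge>N. L n = L N" using N LP by metis
qed

lemma (in ring_hom_ring) left_ore_set_image:
  assumes ore: "left_ore_set R T" and surj: "h ` carrier R = carrier S"
    and nonzero: "\<And>s. s \<in> T \<Longrightarrow> h s \<noteq> \<zero>\<^bsub>S\<^esub>"
  shows "left_ore_set S (h ` T)"
proof -
  have T: "T \<subseteq> carrier R" "\<one> \<in> T" "\<And>s t. s \<in> T \<Longrightarrow> t \<in> T \<Longrightarrow> s \<otimes> t \<in> T"
    and cond: "\<And>s r. s \<in> T \<Longrightarrow> r \<in> carrier R \<Longrightarrow> \<exists>s'\<in>T. \<exists>r'\<in>carrier R. s' \<otimes> r = r' \<otimes> s"
    using ore unfolding left_ore_set_def by auto
  show ?thesis
    unfolding left_ore_set_def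
  proof (intro conjI ballI)
    show "h ` T \<subseteq> carrier S" using T(1) by auto
    show "\<one>\<^bsub>S\<^esub> \<in> h ` T" using T(2) hom_one by force
    show "\<zero>\<^bsub>S\<^esub> \<notin> h ` T" using nonzero by (metis imageE)
  next
    fix a b assume "a \<in> h ` T" "b \<in> h ` T"
    then obtain s t where st: "s \<in> T" "a = h s" "t \<in> T" "b = h t" by blast
    moreover have "s \<in> carrier R" "t \<in> carrier R" using st T(1) by blast+
    ultimately have "a \<otimes>\<^bsub>S\<^esub> b = h (s \<otimes> t)" by simp
    then show "a \<otimes>\<^bsub>S\<^esub> b \<in> h ` T" using T(3)[OF st(1,3)] by blast
  next
    fix a b assume "a \<in> h ` T" "b \<in> carrier S"
    then obtain s r where sr: "s \<in> T" "a = h s" "r \<in> carrier R" "b = h r"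
      using surj by (metis imageE)
    obtain s' r' where s'r': "s' \<in> T" "r' \<in> carrier R" "s' \<otimes> r = r' \<otimes> s"
      using cond[OF sr(1,3)] by blast
    moreover have "s \<in> carrier R" "s' \<in> carrier R" using sr(1) s'r'(1) T(1) by blast+
    ultimately have "h s' \<otimes>\<^bsub>S\<^esub> b = h r' \<otimes>\<^bsub>S\<^esub> a"
      using sr by (simp flip: hom_mult)
    then show "\<exists>s'\<in>h ` T. \<exists>r'\<in>carrier S. s' \<otimes>\<^bsub>S\<^esub> b = r' \<otimes>\<^bsub>S\<^esub> a"
      using s'r'(1) hom_closed[OF s'r'(2)] by blast
  qed
qed

lemma (in ring) in_sumI:
  assumes "finite A" "A \<subseteq> S" "\<And>n. n \<in> A \<Longrightarrow> f n \<in> F n"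
    and "\<And>n. \<zero> \<in> F n" "\<And>n. F n \<subseteq> carrier R"
  shows "in_sum R F S (\<Oplus>n\<in>A. f n)"
proof -
  define g where "g n = (if n \<in> A then f n else \<zero>)" for n
  have supp: "{n. g n \<noteq> \<zero>} \<subseteq> A" by (auto simp: g_def)
  have g: "g n \<in> F n" for n using assms(3,4) by (simp add: g_def)
  have "g n \<in> carrier R" for n using g assms(5) by blast
  then have "(\<Oplus>n\<in>A. f n) = (\<Oplus>n\<in>A. g n)"
    by (intro add.finprod_cong') (auto simp: g_def)
  also have "\<dots> = (\<Oplus>n\<in>{n. g n \<noteq> \<zero>}. g n)"
    using assms(1,5) supp g by (intro finsum_over_support[symmetric]) blast+
  finally show ?thesis
    unfolding in_sum_def using g supp assms(1,2) finite_subset by blast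
qed

lemma (in ring) in_sum_closed:
  assumes "in_sum R F S x" "\<And>n. F n \<subseteq> carrier R"
  shows "x \<in> carrier R"
  using assms unfolding in_sum_def by (auto intro!: finsum_closed)

lemma (in ring_hom_ring) in_sum_image:
  assumes x: "in_sum R F A x" and F: "\<And>n. F n \<subseteq> carrier R"
    and F': "\<And>n. h ` F n \<subseteq> F' n" "\<And>n. \<zero>\<^bsub>S\<^esub> \<in> F' n" "\<And>n. F' n \<subseteq> carrier S"
  shows "in_sum S F' A (h x)"
proof -
  obtain f where f: "\<forall>n. f n \<in> F n" "finite {n. f n \<noteq> \<zero>}" "{n. f n \<noteq> \<zero>} \<subseteq> A"
    "x = (\<Oplus>n\<in>{n. f n \<noteq> \<zero>}. f n)"
    using x unfolding in_sum_def by blast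
  have "f \<in> {n. f n \<noteq> \<zero>} \<rightarrow> carrier R" using f(1) F by blast
  then have "h x = (\<Oplus>\<^bsub>S\<^esub>n\<in>{n. f n \<noteq> \<zero>}. h (f n))"
    using f(4) by (simp add: o_def)
  also have "in_sum S F' A \<dots>"
    using f F' by (intro S.in_sumI) blast+
  finally show ?thesis .
qed

section \<open>Semi-graded rings\<close>

lemma good_ore_set_subset_carrier: "good_ore_set R G T \<Longrightarrow> T \<subseteq> carrier R"
  unfolding good_ore_set_def left_ore_set_def by blast

locale semi_graded_ring =
  fixes R :: "('a, 'b) ring_scheme" (structure) and G :: "int \<Rightarrow> 'a set"
  assumes semi_graded: "semi_graded R G"

sublocale semi_graded_ring \<subseteq> ring R
  using semi_graded by (simp add: semi_graded_def)

context semi_graded_ring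
begin

lemma component_subgroup: "additive_subgroup (G n) R"
  using semi_graded by (simp add: semi_graded_def direct_sum_decomp_def)

lemma component_subset_carrier: "G n \<subseteq> carrier R"
  using component_subgroup by (rule additive_subgroup.a_subset)

lemma zero_in_component: "\<zero> \<in> G n"
  using component_subgroup by (rule additive_subgroup.zero_closed)

lemma homogeneous_decomposition:
  assumes "x \<in> carrier R"
  obtains f where "\<forall>n. f n \<in> G n" "finite {n. f n \<noteq> \<zero>}" "x = (\<Oplus>n\<in>{n. f n \<noteq> \<zero>}. f n)"
  using semi_graded assms unfolding semi_graded_def direct_sum_decomp_def by blast

lemma homogeneous_decomposition_unique:
  assumes "\<forall>n. f n \<in> G n" "finite {n. f n \<noteq> \<zero>}" "\<forall>n. g n \<in> G n" "finite {n. g n \<noteq> \<zero>}"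
    and "(\<Oplus>n\<in>{n. f n \<noteq> \<zero>}. f n) = (\<Oplus>n\<in>{n. g n \<noteq> \<zero>}. g n)"
  shows "f = g"
proof -
  have "(\<Oplus>n\<in>{n. f n \<noteq> \<zero>}. f n) \<in> carrier R"
    using assms(1) component_subset_carrier by (blast intro: finsum_closed)
  then show ?thesis
    using semi_graded assms unfolding semi_graded_def direct_sum_decomp_def by blast
qed

lemma sg_ideal_component:
  assumes K: "sg_ideal R G K" and f: "\<forall>n. f n \<in> G n" "finite {n. f n \<noteq> \<zero>}"
    and sum: "(\<Oplus>n\<in>{n. f n \<noteq> \<zero>}. f n) \<in> K"
  shows "f n \<in> K"
proof -
  obtain g where g: "\<forall>n. g n \<in> K \<inter> G n" "finite {n. g n \<noteq> \<zero>}"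
    "(\<Oplus>n\<in>{n. f n \<noteq> \<zero>}. f n) = (\<Oplus>n\<in>{n. g n \<noteq> \<zero>}. g n)"
    using K sum unfolding sg_ideal_def in_sum_def by blast
  then have "f = g" using f by (intro homogeneous_decomposition_unique) blast+
  then show ?thesis using g(1) by blast
qed

lemma sg_ideal_Inter:
  assumes "\<K> \<noteq> {}" "\<And>K. K \<in> \<K> \<Longrightarrow> sg_ideal R G K"
  shows "sg_ideal R G (\<Inter>\<K>)"
  unfolding sg_ideal_def
proof (intro conjI ballI)
  show "ideal (\<Inter>\<K>) R" using assms by (intro i_Intersect) (auto simp: sg_ideal_def)
  fix x assume x: "x \<in> \<Inter>\<K>"
  then have "x \<in> carrier R" using assms unfolding sg_ideal_def by (blast dest: ideal.Icarr)
  then obtain f where f: "\<forall>n. f n \<in> G n" "finite {n. f n \<noteq> \<zero>}" "x = (\<Oplus>n\<in>{n. f n \<noteq> \<zero>}. f n)"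
    by (rule homogeneous_decomposition)
  have "f n \<in> \<Inter>\<K>" for n
    using x f assms(2) sg_ideal_component by blast
  then show "in_sum R (\<lambda>n. \<Inter>\<K> \<inter> G n) UNIV x" unfolding in_sum_def using f by blast
qed

lemma sg_ideal_carrier: "sg_ideal R G (carrier R)"
  unfolding sg_ideal_def
proof (intro conjI ballI)
  show "ideal (carrier R) R" by (rule oneideal)
  fix x assume "x \<in> carrier R"
  then obtain f where "\<forall>n. f n \<in> G n" "finite {n. f n \<noteq> \<zero>}" "x = (\<Oplus>n\<in>{n. f n \<noteq> \<zero>}. f n)"
    by (rule homogeneous_decomposition)
  then show "in_sum R (\<lambda>n. carrier R \<inter> G n) UNIV x"
    unfolding in_sum_def using component_subset_carrier by blast
qed

lemma in_sum_in_R_ge: "in_sum R G {int t..} x \<Longrightarrow> x \<in> R_ge R G t"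
  unfolding R_ge_def by blast

lemma sg_ideal_R_ge: "sg_ideal R G (R_ge R G t)"
proof -
  have "carrier R \<in> {I. sg_ideal R G I \<and> {x. in_sum R G {int t..} x} \<subseteq> I}"
    using sg_ideal_carrier in_sum_closed component_subset_carrier by blast
  then show ?thesis unfolding R_ge_def by (intro sg_ideal_Inter) blast+
qed

lemma R_ge_subset_carrier: "R_ge R G t \<subseteq> carrier R"
  using sg_ideal_R_ge unfolding sg_ideal_def by (blast dest: ideal.Icarr)

lemma R'_subset_carrier: "R' R G \<subseteq> carrier R"
  unfolding R'_def R'_comp_def using component_subset_carrier by blast

end

section \<open>Quotients by semi-graded ideals\<close>

definition quot_ore_sets :: "('a, 'b) ring_scheme \<Rightarrow> 'a set \<Rightarrow> 'a set set \<Rightarrow> 'a set set set" where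
  "quot_ore_sets R J I = (\<lambda>T. (\<lambda>r. J +>\<^bsub>R\<^esub> r) ` T) ` {T \<in> I. T \<inter> J = {}}"

locale sg_quotient = semi_graded_ring +
  fixes J :: "'a set"
  assumes sg_ideal_J: "sg_ideal R G J"

sublocale sg_quotient \<subseteq> ideal J R
  using sg_ideal_J by (simp add: sg_ideal_def)

sublocale sg_quotient \<subseteq> proj: ring_hom_ring R "R Quot J" "(+>) J"
  by (rule rcos_ring_hom_ring)

context sg_quotient
begin

lemma carrier_quot: "carrier (R Quot J) = (+>) J ` carrier R"
  unfolding FactRing_def A_RCOSETS_def' by (simp add: UNION_singleton_eq_range)

lemma proj_eq_zero_iff: "x \<in> carrier R \<Longrightarrow> J +> x = \<zero>\<^bsub>R Quot J\<^esub> \<longleftrightarrow> x \<in> J"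
  unfolding FactRing_def using rcos_const_imp_mem a_rcos_zero[OF ideal_axioms] by auto

lemma quot_component_subgroup: "additive_subgroup (quot_grading R J G n) (R Quot J)"
  using proj.img_is_add_subgroup component_subgroup[of n]
  unfolding quot_grading_def additive_subgroup_def by blast

lemma quot_component_subset_carrier: "quot_grading R J G n \<subseteq> carrier (R Quot J)"
  using quot_component_subgroup by (rule additive_subgroup.a_subset)

lemma zero_in_quot_component: "\<zero>\<^bsub>R Quot J\<^esub> \<in> quot_grading R J G n"
  using quot_component_subgroup by (rule additive_subgroup.zero_closed)

lemma lift_quot_components:
  assumes "\<forall>n. g n \<in> quot_grading R J G n"
  obtains f where "\<forall>n. f n \<in> G n" "\<forall>n. J +> f n = g n"
proof -
  have "\<forall>n. \<exists>r. r \<in> G n \<and> J +> r = g n"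
    using assms unfolding quot_grading_def by blast
  then show ?thesis using that by metis
qed

lemma proj_finsum_components:
  "\<forall>n. f n \<in> G n \<Longrightarrow> J +> (\<Oplus>n\<in>A. f n) = (\<Oplus>\<^bsub>R Quot J\<^esub>n\<in>A. J +> f n)"
  using component_subset_carrier by (subst proj.hom_finsum) (auto simp: o_def)

lemma in_sum_quot:
  assumes "in_sum R G A x"
  shows "in_sum (R Quot J) (quot_grading R J G) A (J +> x)"
  by (rule proj.in_sum_image[OF assms component_subset_carrier _ zero_in_quot_component
        quot_component_subset_carrier]) (simp add: quot_grading_def)

lemma in_sum_quot_lift:
  assumes "in_sum (R Quot J) (quot_grading R J G) A y"
  obtains x where "in_sum R G A x" "J +> x = y"
proof -
  obtain g where g: "\<forall>n. g n \<in> quot_grading R J G n" "finite {n. g n \<noteq> \<zero>\<^bsub>R Quot J\<^esub>}"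
    "{n. g n \<noteq> \<zero>\<^bsub>R Quot J\<^esub>} \<subseteq> A" "y = (\<Oplus>\<^bsub>R Quot J\<^esub>n\<in>{n. g n \<noteq> \<zero>\<^bsub>R Quot J\<^esub>}. g n)"
    using assms unfolding in_sum_def by blast
  obtain f where f: "\<forall>n. f n \<in> G n" "\<forall>n. J +> f n = g n"
    using lift_quot_components[OF g(1)] by blast
  have "in_sum R G A (\<Oplus>n\<in>{n. g n \<noteq> \<zero>\<^bsub>R Quot J\<^esub>}. f n)"
    using g(2,3) f(1) zero_in_component component_subset_carrier by (intro in_sumI) auto
  moreover have "J +> (\<Oplus>n\<in>{n. g n \<noteq> \<zero>\<^bsub>R Quot J\<^esub>}. f n) = y"
    using f g(4) by (simp add: proj_finsum_components)
  ultimately show ?thesis using that by blast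
qed

lemma congruent_homogeneous_sums:
  assumes a: "\<forall>n. a n \<in> G n" and b: "\<forall>n. b n \<in> G n" and A: "finite A"
    and congruent: "J +> (\<Oplus>n\<in>A. a n) = J +> (\<Oplus>n\<in>A. b n)" and n: "n \<in> A"
  shows "J +> a n = J +> b n"
proof -
  have ac: "a k \<in> carrier R" and bc: "b k \<in> carrier R" for k
    using a b component_subset_carrier by blast+
  define d where "d k = (if k \<in> A then a k \<ominus> b k else \<zero>)" for k
  have d: "\<forall>k. d k \<in> G k" "{k. d k \<noteq> \<zero>} \<subseteq> A"
    using a b component_subgroup
    by (auto simp: d_def a_minus_def zero_in_component
        additive_subgroup.a_closed additive_subgroup.a_inv_closed)
  have dc: "d k \<in> carrier R" for k using d(1) component_subset_carrier by blast
  have d_b: "d k \<oplus> b k = a k" if "k \<in> A" for k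
    using that ac bc by (simp add: d_def a_minus_def a_assoc l_neg)
  have sums: "(\<Oplus>k\<in>A. d k) \<in> carrier R" "(\<Oplus>k\<in>A. b k) \<in> carrier R"
    using dc bc by (simp_all add: Pi_iff)
  have "(\<Oplus>k\<in>A. d k) \<oplus> (\<Oplus>k\<in>A. b k) = (\<Oplus>k\<in>A. d k \<oplus> b k)"
    using dc bc by (simp add: Pi_iff finsum_addf)
  also have "\<dots> = (\<Oplus>k\<in>A. a k)"
    using d_b ac by (intro add.finprod_cong') auto
  finally have "J +> (\<Oplus>k\<in>A. d k) = \<zero>\<^bsub>R Quot J\<^esub>"
    using congruent sums by (metis proj.hom_add proj.hom_closed proj.S.add.r_cancel_one)
  then have "(\<Oplus>k\<in>A. d k) \<in> J"
    using sums(1) proj_eq_zero_iff by blast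
  then have "(\<Oplus>k\<in>{k. d k \<noteq> \<zero>}. d k) \<in> J"
    using A d(2) dc by (subst finsum_over_support) auto
  then have "d n \<in> J"
    using d A finite_subset sg_ideal_J sg_ideal_component by blast
  then have "J +> d n = \<zero>\<^bsub>R Quot J\<^esub>" using dc proj_eq_zero_iff by blast
  moreover have "J +> a n = (J +> d n) \<oplus>\<^bsub>R Quot J\<^esub> (J +> b n)"
    using d_b[OF n] dc bc by (metis proj.hom_add)
  ultimately show ?thesis using bc by simp
qed

lemma quot_decomposition_unique:
  assumes f: "\<forall>n. f n \<in> quot_grading R J G n" "finite {n. f n \<noteq> \<zero>\<^bsub>R Quot J\<^esub>}"
    and g: "\<forall>n. g n \<in> quot_grading R J G n" "finite {n. g n \<noteq> \<zero>\<^bsub>R Quot J\<^esub>}"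
    and eq: "(\<Oplus>\<^bsub>R Quot J\<^esub>n\<in>{n. f n \<noteq> \<zero>\<^bsub>R Quot J\<^esub>}. f n)
           = (\<Oplus>\<^bsub>R Quot J\<^esub>n\<in>{n. g n \<noteq> \<zero>\<^bsub>R Quot J\<^esub>}. g n)"
  shows "f = g"
proof
  fix n
  obtain f' where f': "\<forall>n. f' n \<in> G n" "\<forall>n. J +> f' n = f n"
    using lift_quot_components[OF f(1)] by blast
  obtain g' where g': "\<forall>n. g' n \<in> G n" "\<forall>n. J +> g' n = g n"
    using lift_quot_components[OF g(1)] by blast
  define A where "A = {n. f n \<noteq> \<zero>\<^bsub>R Quot J\<^esub>} \<union> {n. g n \<noteq> \<zero>\<^bsub>R Quot J\<^esub>}"
  have A: "finite A" using f(2) g(2) by (simp add: A_def)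
  have "f k \<in> carrier (R Quot J)" "g k \<in> carrier (R Quot J)" for k
    using f(1) g(1) quot_component_subset_carrier by blast+
  then have "(\<Oplus>\<^bsub>R Quot J\<^esub>k\<in>A. f k) = (\<Oplus>\<^bsub>R Quot J\<^esub>k\<in>A. g k)"
    using eq A by (subst (1 2) proj.S.finsum_over_support[symmetric]) (auto simp: A_def)
  then have "J +> (\<Oplus>k\<in>A. f' k) = J +> (\<Oplus>k\<in>A. g' k)"
    using f' g' by (simp add: proj_finsum_components)
  then show "f n = g n"
    using congruent_homogeneous_sums[OF f'(1) g'(1) A] f'(2) g'(2) by (cases "n \<in> A") (auto simp: A_def)
qed

lemma proj_mult_homogeneous:
  assumes "a \<in> G m" "b \<in> G n"
  shows "(J +> a) \<otimes>\<^bsub>R Quot J\<^esub> (J +> b) = J +> (a \<otimes> b)"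
proof -
  have "a \<in> carrier R" "b \<in> carrier R" using assms component_subset_carrier by blast+
  then show ?thesis by simp
qed

lemma direct_sum_decomp_quot: "direct_sum_decomp (R Quot J) (quot_grading R J G)"
  unfolding direct_sum_decomp_def
proof (intro conjI allI ballI)
  show "additive_subgroup (quot_grading R J G n) (R Quot J)" for n
    by (rule quot_component_subgroup)
  fix y assume "y \<in> carrier (R Quot J)"
  then obtain x where x: "x \<in> carrier R" "y = J +> x" using carrier_quot by blast
  then obtain f where "\<forall>n. f n \<in> G n" "finite {n. f n \<noteq> \<zero>}" "x = (\<Oplus>n\<in>{n. f n \<noteq> \<zero>}. f n)"
    by (blast elim: homogeneous_decomposition)
  then have "in_sum R G UNIV x" unfolding in_sum_def by blast
  then have "in_sum (R Quot J) (quot_grading R J G) UNIV y"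
    unfolding x(2) by (rule in_sum_quot)
  then show "\<exists>!g. (\<forall>n. g n \<in> quot_grading R J G n) \<and> finite {n. g n \<noteq> \<zero>\<^bsub>R Quot J\<^esub>}
      \<and> y = (\<Oplus>\<^bsub>R Quot J\<^esub>n\<in>{n. g n \<noteq> \<zero>\<^bsub>R Quot J\<^esub>}. g n)"
    unfolding in_sum_def using quot_decomposition_unique by blast
qed

lemma semi_graded_quot: "semi_graded (R Quot J) (quot_grading R J G)"
  unfolding semi_graded_def
proof (intro conjI ballI allI)
  show "ring (R Quot J)" by (rule quotient_is_ring)
  show "direct_sum_decomp (R Quot J) (quot_grading R J G)" by (rule direct_sum_decomp_quot)
  show "\<one>\<^bsub>R Quot J\<^esub> \<in> quot_grading R J G 0"
    using semi_graded unfolding semi_graded_def quot_grading_def by (metis proj.hom_one image_eqI)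
  fix m n a b assume "a \<in> quot_grading R J G m" "b \<in> quot_grading R J G n"
  then obtain a' b' where ab: "a' \<in> G m" "b' \<in> G n" "a = J +> a'" "b = J +> b'"
    unfolding quot_grading_def by blast
  then have "in_sum R G {..m + n} (a' \<otimes> b')"
    using semi_graded unfolding semi_graded_def by blast
  moreover have "a \<otimes>\<^bsub>R Quot J\<^esub> b = J +> (a' \<otimes> b')"
    using ab by (simp add: proj_mult_homogeneous)
  ultimately show "in_sum (R Quot J) (quot_grading R J G) {..m + n} (a \<otimes>\<^bsub>R Quot J\<^esub> b)"
    by (simp add: in_sum_quot)
qed

lemma pos_semi_graded_quot:
  "pos_semi_graded R G \<Longrightarrow> pos_semi_graded (R Quot J) (quot_grading R J G)"
  unfolding pos_semi_graded_def using semi_graded_quot by (simp add: quot_grading_def)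

lemma left_noetherian_quot: "left_noetherian R \<Longrightarrow> left_noetherian (R Quot J)"
  using carrier_quot by (simp add: proj.left_noetherian_surjective_image)

lemma R'_comp_quot: "r \<in> R'_comp R G n \<Longrightarrow> J +> r \<in> R'_comp (R Quot J) (quot_grading R J G) n"
  unfolding R'_comp_def quot_grading_def by (auto simp: proj_mult_homogeneous)

lemma R''_comp_quot: "r \<in> R''_comp R G n \<Longrightarrow> J +> r \<in> R''_comp (R Quot J) (quot_grading R J G) n"
  using R'_comp_quot unfolding R''_comp_def quot_grading_def
  by (auto simp: proj_mult_homogeneous R'_comp_def)

lemma R'_quot: "(+>) J ` R' R G \<subseteq> R' (R Quot J) (quot_grading R J G)"
  unfolding R'_def using R'_comp_quot by blast

lemma R''_quot: "(+>) J ` R'' R G \<subseteq> R'' (R Quot J) (quot_grading R J G)"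
  unfolding R''_def using R''_comp_quot by blast

lemma good_ore_set_quot:
  assumes good: "good_ore_set R G T" and disjoint: "T \<inter> J = {}" and comp: "compatible R G J"
  shows "good_ore_set (R Quot J) (quot_grading R J G) ((+>) J ` T)"
  unfolding good_ore_set_def
proof (intro conjI ballI)
  have ore: "left_ore_set R T" and T: "T \<subseteq> R'' R G"
    and cond: "\<And>s r. s \<in> T \<Longrightarrow> r \<in> R' R G \<Longrightarrow> \<exists>u\<in>R' R G. \<exists>v\<in>T. u \<otimes> s = v \<otimes> r"
    using good unfolding good_ore_set_def by auto
  have Tc: "T \<subseteq> carrier R" using ore unfolding left_ore_set_def by blast
  have "J +> s \<noteq> \<zero>\<^bsub>R Quot J\<^esub>" if "s \<in> T" for s
    using that Tc disjoint proj_eq_zero_iff by blast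
  then show "left_ore_set (R Quot J) ((+>) J ` T)"
    using carrier_quot by (intro proj.left_ore_set_image[OF ore]) auto
  show "(+>) J ` T \<subseteq> R'' (R Quot J) (quot_grading R J G)"
    using T R''_quot by blast
  fix a b assume "a \<in> (+>) J ` T" and "b \<in> R' (R Quot J) (quot_grading R J G)"
  then obtain s r where sr: "s \<in> T" "a = J +> s" "r \<in> R' R G" "b = J +> r"
    using comp unfolding compatible_def by blast
  then obtain u v where uv: "u \<in> R' R G" "v \<in> T" "u \<otimes> s = v \<otimes> r"
    using cond by blast
  then have "(J +> u) \<otimes>\<^bsub>R Quot J\<^esub> a = (J +> v) \<otimes>\<^bsub>R Quot J\<^esub> b"
    using sr Tc R'_subset_carrier by (metis proj.hom_mult subsetD)
  moreover have "J +> u \<in> R' (R Quot J) (quot_grading R J G)" using uv(1) R'_quot by blast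
  ultimately show "\<exists>u\<in>R' (R Quot J) (quot_grading R J G). \<exists>v\<in>(+>) J ` T.
      u \<otimes>\<^bsub>R Quot J\<^esub> a = v \<otimes>\<^bsub>R Quot J\<^esub> b"
    using uv(2) by blast
qed

lemma sg_ideal_quot:
  assumes "sg_ideal R G K"
  shows "sg_ideal (R Quot J) (quot_grading R J G) ((+>) J ` K)"
  unfolding sg_ideal_def
proof (intro conjI ballI)
  have K: "ideal K R" using assms by (simp add: sg_ideal_def)
  show quot_ideal: "ideal ((+>) J ` K) (R Quot J)"
    using ideal_axioms K by (rule ring_ideal_imp_quot_ideal)
  fix y assume "y \<in> (+>) J ` K"
  then obtain k where k: "k \<in> K" "y = J +> k" by blast
  have "in_sum R (\<lambda>n. K \<inter> G n) UNIV k" using assms k(1) by (simp add: sg_ideal_def)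
  then show "in_sum (R Quot J) (\<lambda>n. (+>) J ` K \<inter> quot_grading R J G n) UNIV y"
    unfolding k(2) using K quot_ideal zero_in_quot_component quot_component_subset_carrier
    by (intro proj.in_sum_image)
      (auto simp: quot_grading_def ideal.Icarr additive_subgroup.zero_closed ideal.axioms(1))
qed

lemma R_ge_quot_subset: "R_ge (R Quot J) (quot_grading R J G) t \<subseteq> (+>) J ` R_ge R G t"
proof -
  have "sg_ideal (R Quot J) (quot_grading R J G) ((+>) J ` R_ge R G t)"
    by (rule sg_ideal_quot[OF sg_ideal_R_ge])
  moreover have "{y. in_sum (R Quot J) (quot_grading R J G) {int t..} y} \<subseteq> (+>) J ` R_ge R G t"
  proof
    fix y assume "y \<in> {y. in_sum (R Quot J) (quot_grading R J G) {int t..} y}"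
    then obtain x where "in_sum R G {int t..} x" "J +> x = y"
      by (blast elim: in_sum_quot_lift)
    then show "y \<in> (+>) J ` R_ge R G t" using in_sum_in_R_ge by blast
  qed
  ultimately show ?thesis unfolding R_ge_def[of "R Quot J"] by blast
qed

lemma quot_ore_sets_good:
  assumes "\<forall>T\<in>I. good_ore_set R G T \<and> T \<inter> {x. in_sum R G {1..} x} \<noteq> {}"
    and comp: "compatible R G J"
  shows "\<forall>T'\<in>quot_ore_sets R J I. good_ore_set (R Quot J) (quot_grading R J G) T'
      \<and> T' \<inter> {y. in_sum (R Quot J) (quot_grading R J G) {1..} y} \<noteq> {}"
proof
  fix T' assume "T' \<in> quot_ore_sets R J I"
  then obtain T where T: "T \<in> I" "T \<inter> J = {}" "T' = (+>) J ` T"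
    unfolding quot_ore_sets_def by blast
  obtain x where x: "x \<in> T" "in_sum R G {1..} x" using assms(1) T(1) by blast
  have "good_ore_set R G T" using assms(1) T(1) by blast
  then have "good_ore_set (R Quot J) (quot_grading R J G) T'"
    unfolding T(3) using T(2) comp by (rule good_ore_set_quot)
  moreover have "J +> x \<in> T' \<inter> {y. in_sum (R Quot J) (quot_grading R J G) {1..} y}"
    unfolding T(3) using x in_sum_quot by blast
  ultimately show "good_ore_set (R Quot J) (quot_grading R J G) T'
      \<and> T' \<inter> {y. in_sum (R Quot J) (quot_grading R J G) {1..} y} \<noteq> {}" by blast
qed

lemma quot_ore_sets_lift_choice:
  assumes y: "y \<in> Pi (quot_ore_sets R J I) (\<lambda>T. T)" and I: "\<And>T. T \<in> I \<Longrightarrow> T \<subseteq> carrier R"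
  obtains x where "x \<in> Pi I (\<lambda>T. T)"
    "\<And>T. T \<in> I \<Longrightarrow> J +> x T = \<zero>\<^bsub>R Quot J\<^esub> \<or> J +> x T \<in> y ` quot_ore_sets R J I"
proof -
  have "\<forall>T\<in>I. \<exists>x. x \<in> T \<and> (J +> x = \<zero>\<^bsub>R Quot J\<^esub> \<or> J +> x \<in> y ` quot_ore_sets R J I)"
  proof
    fix T assume T: "T \<in> I"
    show "\<exists>x. x \<in> T \<and> (J +> x = \<zero>\<^bsub>R Quot J\<^esub> \<or> J +> x \<in> y ` quot_ore_sets R J I)"
    proof (cases "T \<inter> J = {}")
      case True
      then have T': "(+>) J ` T \<in> quot_ore_sets R J I"
        using T unfolding quot_ore_sets_def by blast
      then have "y ((+>) J ` T) \<in> (+>) J ` T" using y by blast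
      then show ?thesis using T' by force
    next
      case False
      then obtain x where "x \<in> T" "x \<in> J" by blast
      then show ?thesis using I[OF T] proj_eq_zero_iff by blast
    qed
  qed
  then obtain x where "\<forall>T\<in>I. x T \<in> T
      \<and> (J +> x T = \<zero>\<^bsub>R Quot J\<^esub> \<or> J +> x T \<in> y ` quot_ore_sets R J I)"
    by (rule bchoice[THEN exE])
  then show ?thesis using that by blast
qed

lemma quot_covering:
  assumes I: "finite I" "\<And>T. T \<in> I \<Longrightarrow> T \<subseteq> carrier R"
    and cover: "\<forall>x \<in> Pi I (\<lambda>T. T). \<exists>t m. ideal_pow R (R_ge R G t) m \<subseteq> left_ideal_sum R I x"
  shows "\<forall>y \<in> Pi (quot_ore_sets R J I) (\<lambda>T. T). \<exists>t m.
    ideal_pow (R Quot J) (R_ge (R Quot J) (quot_grading R J G) t) m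
      \<subseteq> left_ideal_sum (R Quot J) (quot_ore_sets R J I) y"
proof
  fix y assume y: "y \<in> Pi (quot_ore_sets R J I) (\<lambda>T. T)"
  obtain x where x: "x \<in> Pi I (\<lambda>T. T)"
    "\<And>T. T \<in> I \<Longrightarrow> J +> x T = \<zero>\<^bsub>R Quot J\<^esub> \<or> J +> x T \<in> y ` quot_ore_sets R J I"
    using quot_ore_sets_lift_choice[OF y I(2)] by blast
  obtain t m where tm: "ideal_pow R (R_ge R G t) m \<subseteq> left_ideal_sum R I x"
    using cover x(1) by blast
  have xc: "x \<in> I \<rightarrow> carrier R" using x(1) I(2) by blast
  have "quot_ore_sets R J I \<subseteq> Pow (carrier (R Quot J))"
    using I(2) unfolding quot_ore_sets_def carrier_quot by blast
  then have yc: "y \<in> quot_ore_sets R J I \<rightarrow> carrier (R Quot J)" using y by blast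
  have fin: "finite (quot_ore_sets R J I)" using I(1) unfolding quot_ore_sets_def by simp
  have "ideal_pow (R Quot J) (R_ge (R Quot J) (quot_grading R J G) t) m
      \<subseteq> (+>) J ` ideal_pow R (R_ge R G t) m"
    using proj.ideal_pow_image_subset[OF carrier_quot[symmetric] R_ge_subset_carrier
        R_ge_quot_subset] .
  also have "\<dots> \<subseteq> (+>) J ` left_ideal_sum R I x"
    using tm by (rule image_mono)
  also have "\<dots> \<subseteq> left_ideal_sum (R Quot J) (quot_ore_sets R J I) y"
    by (rule proj.left_ideal_sum_image_subset[OF I(1) fin xc yc x(2)])
  finally show "\<exists>t m. ideal_pow (R Quot J) (R_ge (R Quot J) (quot_grading R J G) t) m
      \<subseteq> left_ideal_sum (R Quot J) (quot_ore_sets R J I) y" by blast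
qed

end

theorem mainTheorem9:
  fixes R :: "('a, 'b) ring_scheme" and G :: "int \<Rightarrow> 'a set" and J :: "'a set"
  assumes "schematic R G"
    and "sg_ideal R G J"
    and "compatible R G J"
  shows "schematic (R Quot J) (quot_grading R J G)"
proof -
  interpret sg_quotient R G J
    using assms(1,2) by unfold_locales (simp_all add: schematic_def pos_semi_graded_def)
  obtain I where I: "finite I"
    "\<forall>T\<in>I. good_ore_set R G T \<and> T \<inter> {x. in_sum R G {1..} x} \<noteq> {}"
    "\<forall>x \<in> Pi I (\<lambda>T. T). \<exists>t m. ideal_pow R (R_ge R G t) m \<subseteq> left_ideal_sum R I x"
    using assms(1) unfolding schematic_def by blast
  have "T \<subseteq> carrier R" if "T \<in> I" for T
    using I(2) that good_ore_set_subset_carrier by blast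
  then show ?thesis
    unfolding schematic_def
  proof (intro conjI exI[of _ "quot_ore_sets R J I"])
    show "pos_semi_graded (R Quot J) (quot_grading R J G)"
      using assms(1) pos_semi_graded_quot unfolding schematic_def by blast
    show "left_noetherian (R Quot J)"
      using assms(1) left_noetherian_quot unfolding schematic_def by blast
    show "finite (quot_ore_sets R J I)" using I(1) unfolding quot_ore_sets_def by simp
  qed (use quot_ore_sets_good[OF I(2) assms(3)] quot_covering[OF I(1) _ I(3)] in auto)
qed

end
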